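(* Let $T>0$, $N=2$, $M=1$. Consider the problem of minimizing $\mathbb V(T)=\frac12(\xi_1(T)^2+\xi_2(T)^2)$ over $\alpha\in\mathcal U_1$, where $\dot\xi_i=-\xi_i+(1-\alpha_i)\bar\xi$ ($i=1,2$), $\bar\xi=\frac12(\xi_1+\xi_2)$, with initial datum satisfying $\bar\xi(0)>0$ and $\xi_1(0)>\xi_2(0)$. Let $\alpha=(\alpha_1,\alpha_2)\in\mathcal U_1$ be an optimal control whose trajectory $\xi$ satisfies $\xi_1(t)\ge\xi_2(t)$ for all $t\in[0,T]$. Define $t_0=2\ln(\xi_1(0)/\bar\xi(0))$. Then: (i) $T\ge t_0$ if and only if $\xi_1(T)=\xi_2(T)$. In this case $\alpha_1+\alpha_2\equiv1$ (so $\bar\xi(t)=\bar\xi(0)e^{-t/2}$); for instance the control $(\alpha_1,\alpha_2)(t)=(1,0)$ for $t\in[0,t_0)$ and $(\alpha_1,\alpha_2)(t)=(1/2,1/2)$ for $t\in[t_0,T]$ is optimal. (ii) If $T<t_0$, then $\alpha(t)=(0,0)$ for all $t\in[0,t^* )$ and $\alpha(t)=(1,0)$ for all $t\in[t^*,T]$, where $t^*=2\ln\bar X$ and $\bar X\in[1,e^{T/2})$ is $$\bar X=\arg\min_{X\in[1,e^{T/2}]}\Big[\big(\xi_1(0)+\bar\xi(0)(X^2-1)\big)^2+\big(\xi_2(0)+\bar\xi(0)(X^2-1)+2\bar\xi(0)X(e^{T/2}-X)\big)^2\Big].$$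
   Context: $\mathcal U_1$ is the set of measurable $\alpha:[0,T]\to[0,1]^2$ with $\alpha_1(t)+\alpha_2(t)\le1$ for all $t$. The $\xi_i$ are projected velocities in a collective migration model with target velocity $0$. *)

theory Defs
  imports "HOL-Analysis.Analysis"
begin

definition U1 :: "real \<Rightarrow> (real \<Rightarrow> real \<times> real) set" where
  "U1 T = {\<alpha>. \<alpha> \<in> borel_measurable (restrict_space lebesgue {0..T}) \<and>
     (\<forall>t\<in>{0..T}. 0 \<le> fst (\<alpha> t) \<and> fst (\<alpha> t) \<le> 1 \<and> 0 \<le> snd (\<alpha> t) \<and> snd (\<alpha> t) \<le> 1
        \<and> fst (\<alpha> t) + snd (\<alpha> t) \<le> 1)}"

definition mean :: "real \<times> real \<Rightarrow> real" where
  "mean x = (fst x + snd x) / 2"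

definition dyn :: "real \<times> real \<Rightarrow> real \<times> real \<Rightarrow> real \<times> real" where
  "dyn a x = (- fst x + (1 - fst a) * mean x, - snd x + (1 - snd a) * mean x)"

text \<open>xi is the (Caratheodory) trajectory on [0,T] of control alpha with initial datum x0.\<close>
definition is_traj :: "real \<Rightarrow> (real \<Rightarrow> real \<times> real) \<Rightarrow> real \<times> real \<Rightarrow> (real \<Rightarrow> real \<times> real) \<Rightarrow> bool" where
  "is_traj T \<alpha> x0 \<xi> \<longleftrightarrow> \<xi> 0 = x0 \<and>
     (\<forall>t\<in>{0..T}. ((\<lambda>s. dyn (\<alpha> s) (\<xi> s)) has_integral (\<xi> t - \<xi> 0)) {0..t})"

definition cost :: "real \<times> real \<Rightarrow> real" where
  "cost x = (fst x ^ 2 + snd x ^ 2) / 2"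

definition optimal_pair :: "real \<Rightarrow> real \<times> real \<Rightarrow> (real \<Rightarrow> real \<times> real) \<Rightarrow> (real \<Rightarrow> real \<times> real) \<Rightarrow> bool" where
  "optimal_pair T x0 \<alpha> \<xi> \<longleftrightarrow> \<alpha> \<in> U1 T \<and> is_traj T \<alpha> x0 \<xi> \<and>
     (\<forall>\<beta> \<eta>. \<beta> \<in> U1 T \<longrightarrow> is_traj T \<beta> x0 \<eta> \<longrightarrow> cost (\<xi> T) \<le> cost (\<eta> T))"

definition optimal_control :: "real \<Rightarrow> real \<times> real \<Rightarrow> (real \<Rightarrow> real \<times> real) \<Rightarrow> bool" where
  "optimal_control T x0 \<alpha> \<longleftrightarrow> (\<exists>\<xi>. optimal_pair T x0 \<alpha> \<xi>)"

end

(*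
  Write m = (xi_1 + xi_2)/2, d = xi_1 - xi_2, b = (alpha_1 + alpha_2)/2 and E = e^(T/2).
  Then m' = -b m with b in [0, 1/2], so e^(t/2) m(t) is nondecreasing and
  X = E m(T) / m(0) lies in [1, E]; moreover 4 e^(2T) V(T) = (2 m(0) X E)^2 + (e^T d(T))^2.
  The function z = e^t m is bounded by m(0) e^t and by m(0) X e^(t/2), which cross at
  tau = 2 ln X; integrating (e^t d)' = e^t (alpha_2 - alpha_1) m against these bounds gives
  e^T d(T) = G(X) + (nonnegative slacks) with G(Y) = d(0) + 2 m(0) Y (Y - E).
  The control (0,0) on [0, 2 ln Y), (1,0) afterwards makes all slacks vanish and costs
  F(Y) = (2 m(0) Y E)^2 + G(Y)^2.
  If T >= t0, the control (1,0) then (1/2,1/2) attains the lower bound (2 m(0) E)^2, which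
  forces d(T) = 0 and X = 1. If T < t0, then G(1) > 0; comparing with Y = 1 shows G(X) > 0,
  so e^T d(T) >= G(X) > 0 and optimality forces the slacks to vanish and X to minimise F,
  while X = E is excluded because F decreases just below E.
*)

theory Submission
  imports Defs
begin

section \<open>Integration on intervals\<close>

lemma sigma_finite_measure_lebesgue: "sigma_finite_measure (lebesgue :: 'a::euclidean_space measure)"
proof
  obtain A :: "'a set set" where "countable A" "A \<subseteq> sets lborel" "\<Union>A = space lborel"
    "\<forall>a\<in>A. emeasure lborel a \<noteq> \<infinity>"
    using lborel.sigma_finite_countable by blast
  then show "\<exists>A. countable A \<and> A \<subseteq> sets (lebesgue :: 'a measure) \<and> \<Union> A = space lebesgue
      \<and> (\<forall>a\<in>A. emeasure lebesgue a \<noteq> \<infinity>)"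
    by (intro exI[of _ A]) (auto simp: subset_eq)
qed

interpretation lebesgue_pair: pair_sigma_finite "lebesgue :: real measure" "lebesgue :: real measure"
  by (simp add: pair_sigma_finite_def sigma_finite_measure_lebesgue)

lemma absolutely_integrable_continuous_mult_real:
  fixes f g :: "real \<Rightarrow> real"
  assumes g: "g absolutely_integrable_on {a..b}" and f: "continuous_on {a..b} f"
  shows "(\<lambda>x. f x * g x) absolutely_integrable_on {a..b}"
proof (rule absolutely_integrable_bounded_measurable_product_real)
  show "f \<in> borel_measurable (lebesgue_on {a..b})"
    using f by (intro continuous_imp_measurable_on_sets_lebesgue) auto
  show "bounded (f ` {a..b})"
    using f by (intro compact_imp_bounded compact_continuous_image) auto
qed (use g in auto)

definition triangle_kernel :: "real \<Rightarrow> real \<Rightarrow> (real \<Rightarrow> real) \<Rightarrow> (real \<Rightarrow> real) \<Rightarrow> real \<times> real \<Rightarrow> real"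
  where "triangle_kernel a b h g p =
    (if a \<le> snd p \<and> snd p \<le> fst p \<and> fst p \<le> b then h (fst p) * g (snd p) else 0)"

lemma triangle_kernel_measurable:
  fixes g h :: "real \<Rightarrow> real"
  assumes g: "g absolutely_integrable_on {a..b}" and h: "continuous_on {a..b} h"
  shows "triangle_kernel a b h g \<in> borel_measurable (lebesgue \<Otimes>\<^sub>M lebesgue)"
proof -
  define hh where "hh s = indicator {a..b} s *\<^sub>R h s" for s
  define gg where "gg r = indicator {a..b} r *\<^sub>R g r" for r
  have [measurable]: "gg \<in> borel_measurable lebesgue"
    using g unfolding set_integrable_def gg_def by auto
  have [measurable]: "hh \<in> borel_measurable lebesgue"
    unfolding hh_def
    using borel_measurable_continuous_on_indicator[OF _ h] by (intro measurable_completion) simp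
  have id_meas: "(\<lambda>x::real. x) \<in> borel_measurable lebesgue"
    by (rule measurable_completion) simp
  have [measurable]: "(\<lambda>p. fst p :: real) \<in> borel_measurable (lebesgue \<Otimes>\<^sub>M lebesgue)"
    using measurable_compose[OF measurable_fst id_meas, of lebesgue] by simp
  have [measurable]: "(\<lambda>p. snd p :: real) \<in> borel_measurable (lebesgue \<Otimes>\<^sub>M lebesgue)"
    using measurable_compose[OF measurable_snd id_meas, of lebesgue] by simp
  have "triangle_kernel a b h g = (\<lambda>p. if snd p \<le> fst p then hh (fst p) * gg (snd p) else 0)"
    by (auto simp: triangle_kernel_def hh_def gg_def indicator_def fun_eq_iff)
  then show ?thesis
    by simp
qed

lemma triangle_kernel_integrable:
  fixes g h :: "real \<Rightarrow> real"
  assumes g: "g absolutely_integrable_on {a..b}" and h: "continuous_on {a..b} h"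
  shows "integrable (lebesgue \<Otimes>\<^sub>M lebesgue) (triangle_kernel a b h g)"
proof -
  let ?K = "triangle_kernel a b h g"
  note [measurable] = triangle_kernel_measurable[OF g h]
  define gg where "gg r = indicator {a..b} r *\<^sub>R g r" for r
  have gg_int: "integrable lebesgue gg"
    using g unfolding set_integrable_def gg_def by simp
  obtain C where C: "C \<ge> 0" "\<And>s. s \<in> {a..b} \<Longrightarrow> \<bar>h s\<bar> \<le> C"
    using continuous_on_compact_bound[OF compact_Icc h] by auto
  have bound: "\<bar>?K (s, r)\<bar> \<le> indicator {a..b} s * (C * \<bar>gg r\<bar>)" for s r
    using C by (cases "a \<le> r \<and> r \<le> s \<and> s \<le> b") (auto simp: triangle_kernel_def gg_def abs_mult mult_right_mono)
  have inner_int: "integrable lebesgue (\<lambda>r. ?K (s, r))" for s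
  proof (rule Bochner_Integration.integrable_bound[of _ "\<lambda>r. C * gg r"])
    have "\<bar>?K (s, r)\<bar> \<le> \<bar>C * gg r\<bar>" for r
      using bound[of s r] C(1) mult_left_le_one_le[of "C * \<bar>gg r\<bar>" "indicator {a..b} s"]
      by (simp add: abs_mult)
    then show "AE r in lebesgue. norm (?K (s, r)) \<le> norm (C * gg r)" by simp
  qed (use gg_int in auto)
  have inner_bound: "(\<integral>r. \<bar>?K (s, r)\<bar> \<partial>lebesgue) \<le> indicator {a..b} s * (C * (\<integral>r. \<bar>gg r\<bar> \<partial>lebesgue))" for s
    using integral_mono[OF integrable_abs[OF inner_int] _ bound, of s] gg_int by simp
  show ?thesis
  proof (rule lebesgue_pair.Fubini_integrable)
    show "integrable lebesgue (\<lambda>s. \<integral>r. norm (?K (s, r)) \<partial>lebesgue)"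
    proof (rule Bochner_Integration.integrable_bound
        [of _ "\<lambda>s. indicator {a..b} s * (C * (\<integral>r. \<bar>gg r\<bar> \<partial>lebesgue))"])
      show "integrable lebesgue (\<lambda>s. indicator {a..b} s * (C * (\<integral>r. \<bar>gg r\<bar> \<partial>lebesgue)))"
        by (intro integrable_mult_left) (simp add: integrable_real_indicator emeasure_lborel_Icc_eq)
      have "(\<lambda>p. norm (?K p)) \<in> borel_measurable (lebesgue \<Otimes>\<^sub>M lebesgue)" by measurable
      then show "(\<lambda>s. \<integral>r. norm (?K (s, r)) \<partial>lebesgue) \<in> borel_measurable lebesgue"
        using sigma_finite_measure.borel_measurable_lebesgue_integral
            [OF sigma_finite_measure_lebesgue, of "\<lambda>s r. norm (?K (s, r))" lebesgue]
        by (simp add: case_prod_unfold)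
      show "AE s in lebesgue. norm (\<integral>r. norm (?K (s, r)) \<partial>lebesgue)
          \<le> norm (indicator {a..b} s * (C * (\<integral>r. \<bar>gg r\<bar> \<partial>lebesgue)))"
        by (intro AE_I2) (simp add: integral_nonneg_AE, rule order_trans[OF inner_bound abs_ge_self])
    qed
  qed (use inner_int in auto)
qed

lemma integral_triangle_kernel_snd:
  fixes g h :: "real \<Rightarrow> real"
  assumes g: "g absolutely_integrable_on {a..b}"
  shows "(\<integral>r. triangle_kernel a b h g (s, r) \<partial>lebesgue) = indicator {a..b} s * (h s * integral {a..s} g)"
proof (cases "s \<in> {a..b}")
  case True
  have "(\<integral>r. triangle_kernel a b h g (s, r) \<partial>lebesgue) = (\<integral>r. h s * (indicator {a..s} r *\<^sub>R g r) \<partial>lebesgue)"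
    by (rule Bochner_Integration.integral_cong) (use True in \<open>auto simp: triangle_kernel_def indicator_def\<close>)
  also have "\<dots> = h s * (LINT r:{a..s}|lebesgue. g r)"
    by (simp add: set_lebesgue_integral_def)
  also have "(LINT r:{a..s}|lebesgue. g r) = integral {a..s} g"
    by (rule set_lebesgue_integral_eq_integral(2), rule set_integrable_subset[OF g]) (use True in auto)
  finally show ?thesis
    using True by simp
next
  case False
  then have "triangle_kernel a b h g (s, r) = 0" for r
    by (auto simp: triangle_kernel_def)
  then show ?thesis
    using False by simp
qed

lemma integral_triangle_kernel_fst:
  fixes g h :: "real \<Rightarrow> real"
  assumes h: "continuous_on {a..b} h"
  shows "(\<integral>s. triangle_kernel a b h g (s, r) \<partial>lebesgue) = indicator {a..b} r * (g r * integral {r..b} h)"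
proof (cases "r \<in> {a..b}")
  case True
  have "(\<integral>s. triangle_kernel a b h g (s, r) \<partial>lebesgue) = (\<integral>s. g r * (indicator {r..b} s *\<^sub>R h s) \<partial>lebesgue)"
    by (rule Bochner_Integration.integral_cong) (use True in \<open>auto simp: triangle_kernel_def indicator_def\<close>)
  also have "\<dots> = g r * (LINT s:{r..b}|lebesgue. h s)"
    by (simp add: set_lebesgue_integral_def)
  also have "(LINT s:{r..b}|lebesgue. h s) = integral {r..b} h"
    using True by (intro set_lebesgue_integral_eq_integral(2) absolutely_integrable_continuous_real
        continuous_on_subset[OF h]) auto
  finally show ?thesis
    using True by simp
next
  case False
  then have "triangle_kernel a b h g (s, r) = 0" for s
    by (auto simp: triangle_kernel_def)
  then show ?thesis
    using False by simp
qed

lemma integral_triangle_swap: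
  fixes g h :: "real \<Rightarrow> real"
  assumes g: "g absolutely_integrable_on {a..b}" and h: "continuous_on {a..b} h"
  shows "integral {a..b} (\<lambda>s. h s * integral {a..s} g) = integral {a..b} (\<lambda>r. g r * integral {r..b} h)"
proof -
  have g_int: "g integrable_on {a..b}"
    using g set_lebesgue_integral_eq_integral(1) by blast
  have "integral {a..b} (\<lambda>s. h s * integral {a..s} g) = (LINT s:{a..b}|lebesgue. h s * integral {a..s} g)"
    by (intro set_lebesgue_integral_eq_integral(2)[symmetric] absolutely_integrable_continuous_real
        continuous_intros h indefinite_integral_continuous_1 g_int)
  also have "\<dots> = (\<integral>s. (\<integral>r. triangle_kernel a b h g (s, r) \<partial>lebesgue) \<partial>lebesgue)"
    by (simp add: integral_triangle_kernel_snd[OF g] set_lebesgue_integral_def)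
  also have "\<dots> = (\<integral>r. (\<integral>s. triangle_kernel a b h g (s, r) \<partial>lebesgue) \<partial>lebesgue)"
    using lebesgue_pair.Fubini_integral[of "\<lambda>s r. triangle_kernel a b h g (s, r)"]
      triangle_kernel_integrable[OF g h] by simp
  also have "\<dots> = (LINT r:{a..b}|lebesgue. integral {r..b} h * g r)"
    by (simp add: integral_triangle_kernel_fst[OF h] set_lebesgue_integral_def mult.commute)
  also have "\<dots> = integral {a..b} (\<lambda>r. g r * integral {r..b} h)"
    by (simp add: mult.commute[of "g _"], intro set_lebesgue_integral_eq_integral(2)
        absolutely_integrable_continuous_mult_real g indefinite_integral_continuous_1'
        integrable_continuous_real h)
  finally show ?thesis .
qed

lemma has_integral_deriv_mult_indefinite_integral:
  fixes g \<phi> \<phi>' :: "real \<Rightarrow> real"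
  assumes g: "g absolutely_integrable_on {a..b}"
    and \<phi>: "\<And>x. x \<in> {a..b} \<Longrightarrow> (\<phi> has_real_derivative \<phi>' x) (at x within {a..b})"
    and \<phi>': "continuous_on {a..b} \<phi>'"
  shows "((\<lambda>s. \<phi>' s * integral {a..s} g) has_integral integral {a..b} (\<lambda>r. g r * (\<phi> b - \<phi> r))) {a..b}"
proof -
  have ftc: "(\<phi>' has_integral (\<phi> b - \<phi> r)) {r..b}" if "r \<in> {a..b}" for r
  proof (rule fundamental_theorem_of_calculus)
    fix x assume "x \<in> {r..b}"
    with that show "(\<phi> has_vector_derivative \<phi>' x) (at x within {r..b})"
      unfolding has_real_derivative_iff_has_vector_derivative[symmetric]
      by (intro has_field_derivative_subset[OF \<phi>]) auto
  qed (use that in auto)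
  have g_int: "g integrable_on {a..b}"
    using g set_lebesgue_integral_eq_integral(1) by blast
  have "(\<lambda>s. \<phi>' s * integral {a..s} g) integrable_on {a..b}"
    by (intro integrable_continuous_real continuous_intros \<phi>' indefinite_integral_continuous_1 g_int)
  moreover have "integral {a..b} (\<lambda>s. \<phi>' s * integral {a..s} g) = integral {a..b} (\<lambda>r. g r * (\<phi> b - \<phi> r))"
    unfolding integral_triangle_swap[OF g \<phi>'] using ftc
    by (intro integral_cong) (auto simp: integral_unique)
  ultimately show ?thesis
    by (metis integrable_integral)
qed

lemma has_integral_mult_indefinite_integral:
  fixes u g \<phi> \<phi>' :: "real \<Rightarrow> real"
  assumes ab: "a \<le> b"
    and g: "g absolutely_integrable_on {a..b}"
    and u: "\<And>t. t \<in> {a..b} \<Longrightarrow> u t = u a + integral {a..t} g"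
    and \<phi>: "\<And>x. x \<in> {a..b} \<Longrightarrow> (\<phi> has_real_derivative \<phi>' x) (at x within {a..b})"
    and \<phi>': "continuous_on {a..b} \<phi>'"
  shows "((\<lambda>s. \<phi>' s * u s + \<phi> s * g s) has_integral (\<phi> b * u b - \<phi> a * u a)) {a..b}"
proof -
  let ?I = "integral {a..b} (\<lambda>r. g r * (\<phi> b - \<phi> r))"
  have "(\<phi>' has_integral (\<phi> b - \<phi> a)) {a..b}"
    using ab \<phi> by (intro fundamental_theorem_of_calculus)
      (auto simp: has_real_derivative_iff_has_vector_derivative[symmetric])
  from has_integral_add[OF has_integral_mult_right[OF this, of "u a"]
      has_integral_deriv_mult_indefinite_integral[OF g \<phi> \<phi>']]
  have F1: "((\<lambda>s. u a * \<phi>' s + \<phi>' s * integral {a..s} g) has_integral (u a * (\<phi> b - \<phi> a) + ?I)) {a..b}" .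
  have "(\<lambda>r. (\<phi> b - \<phi> r) * g r) absolutely_integrable_on {a..b}"
    by (intro absolutely_integrable_continuous_mult_real g continuous_intros DERIV_continuous_on[OF \<phi>])
  then have "(\<lambda>r. g r * (\<phi> b - \<phi> r)) integrable_on {a..b}" "g integrable_on {a..b}"
    using g set_lebesgue_integral_eq_integral(1) by (simp_all add: mult.commute)
  then have F2: "((\<lambda>r. \<phi> b * g r - g r * (\<phi> b - \<phi> r)) has_integral (\<phi> b * integral {a..b} g - ?I)) {a..b}"
    by (intro has_integral_diff has_integral_mult_right integrable_integral)
  have "u a * (\<phi> b - \<phi> a) + ?I + (\<phi> b * integral {a..b} g - ?I) = \<phi> b * u b - \<phi> a * u a"
    using u[of b] ab by (simp add: algebra_simps)
  with has_integral_add[OF F1 F2]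
  have "((\<lambda>s. (u a * \<phi>' s + \<phi>' s * integral {a..s} g) + (\<phi> b * g s - g s * (\<phi> b - \<phi> s)))
      has_integral (\<phi> b * u b - \<phi> a * u a)) {a..b}"
    by simp
  then show ?thesis
  proof (rule has_integral_eq[rotated])
    fix s assume "s \<in> {a..b}"
    then show "(u a * \<phi>' s + \<phi>' s * integral {a..s} g) + (\<phi> b * g s - g s * (\<phi> b - \<phi> s))
        = \<phi>' s * u s + \<phi> s * g s"
      by (subst u) (auto simp: algebra_simps)
  qed
qed

lemma has_integral_exp_mult:
  fixes u g :: "real \<Rightarrow> real"
  assumes ab: "a \<le> b" and g: "g absolutely_integrable_on {a..b}"
    and u: "\<And>t. t \<in> {a..b} \<Longrightarrow> (g has_integral (u t - u a)) {a..t}"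
  shows "((\<lambda>s. exp (c * s) * (c * u s + g s)) has_integral (exp (c * b) * u b - exp (c * a) * u a)) {a..b}"
proof -
  have "((\<lambda>s. c * exp (c * s) * u s + exp (c * s) * g s) has_integral
      (exp (c * b) * u b - exp (c * a) * u a)) {a..b}"
  proof (rule has_integral_mult_indefinite_integral[OF ab g])
    show "u t = u a + integral {a..t} g" if "t \<in> {a..b}" for t
      using integral_unique[OF u[OF that]] by simp
  qed (auto intro!: derivative_eq_intros continuous_intros)
  then show ?thesis
    by (simp add: algebra_simps)
qed

lemma has_integral_0_nonneg_AE_eq_0:
  fixes f :: "real \<Rightarrow> real"
  assumes f: "(f has_integral 0) {a..b}" and nonneg: "\<And>x. x \<in> {a..b} \<Longrightarrow> f x \<ge> 0"
  shows "AE x in lborel. x \<in> {a..b} \<longrightarrow> f x = 0"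
proof -
  have f_abs: "f absolutely_integrable_on {a..b}"
    using f nonneg by (intro nonnegative_absolutely_integrable_1) (auto simp: has_integral_integrable)
  have "(LINT x:{a..b}|lebesgue. f x) = 0"
    using set_lebesgue_integral_eq_integral(2)[OF f_abs] integral_unique[OF f] by simp
  then have "AE x in lebesgue. indicator {a..b} x *\<^sub>R f x = 0"
    using f_abs nonneg unfolding set_lebesgue_integral_def set_integrable_def
    by (subst integral_nonneg_eq_0_iff_AE[symmetric]) (auto simp: indicator_def)
  then have "AE x in lebesgue. x \<in> {a..b} \<longrightarrow> f x = 0"
    by eventually_elim (auto simp: indicator_def)
  then show ?thesis
    by (simp add: AE_completion_iff)
qed

lemma has_integral_Icc_diff:
  fixes f :: "real \<Rightarrow> 'a::banach"
  assumes "(f has_integral i) {a..c}" "(f has_integral j) {a..b}" "a \<le> b" "b \<le> c"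
  shows "(f has_integral (i - j)) {b..c}"
proof -
  have "f integrable_on {b..c}"
    using integrable_on_subinterval[OF has_integral_integrable[OF assms(1)]] assms(3,4) by auto
  then have bc: "(f has_integral integral {b..c} f) {b..c}"
    by (rule integrable_integral)
  have "(f has_integral (j + integral {b..c} f)) {a..c}"
    using has_integral_combine[OF assms(3,4) assms(2) bc] .
  then have "i = j + integral {b..c} f"
    using assms(1) by (rule has_integral_unique[rotated])
  then show ?thesis
    using bc by simp
qed

lemma has_integral_of_real_derivative:
  fixes F f :: "real \<Rightarrow> real"
  assumes "a \<le> b" "\<And>x. (F has_real_derivative f x) (at x)"
  shows "(f has_integral (F b - F a)) {a..b}"
  by (rule fundamental_theorem_of_calculus[OF assms(1)])
     (auto simp: has_real_derivative_iff_has_vector_derivative[symmetric]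
        intro: has_field_derivative_at_within assms(2))

section \<open>Switching controls\<close>

text \<open>For the control that is \<open>(0, 0)\<close> on \<open>[0, 2 ln Y)\<close> and \<open>(1, 0)\<close> afterwards, and with
  \<open>E = exp (T/2)\<close>, \<open>switch_gap\<close> is \<open>exp T * (\<xi>\<^sub>1 T - \<xi>\<^sub>2 T)\<close> and \<open>switch_cost\<close> is
  \<open>4 * exp (2 * T)\<close> times the terminal cost.\<close>

definition switch_gap :: "real \<Rightarrow> real \<Rightarrow> real \<Rightarrow> real \<Rightarrow> real" where
  "switch_gap d0 m0 E Y = d0 + 2 * m0 * Y * (Y - E)"

definition switch_cost :: "real \<Rightarrow> real \<Rightarrow> real \<Rightarrow> real \<Rightarrow> real" where
  "switch_cost d0 m0 E Y = (2 * m0 * Y * E)^2 + (switch_gap d0 m0 E Y)^2"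

lemma sum_squares_eq_half_switch_cost:
  "(fst x0 + mean x0 * (Y^2 - 1))^2 + (snd x0 + mean x0 * (Y^2 - 1) + 2 * mean x0 * Y * (E - Y))^2
    = switch_cost (fst x0 - snd x0) (mean x0) E Y / 2"
  by (simp add: switch_cost_def switch_gap_def mean_def field_simps power2_eq_square)

lemma switch_cost_1_lt:
  assumes m0: "0 < m0" and E: "0 < E" and X: "1 < X"
    and gap_X: "switch_gap d0 m0 E X \<le> 0" and gap_1: "0 < switch_gap d0 m0 E 1"
  shows "switch_cost d0 m0 E 1 < (2 * m0 * X * E)^2"
proof -
  define \<epsilon> k where "\<epsilon> = X - 1" and "k = 2 * m0 * E"
  have "\<epsilon> > 0" "k > 0"
    using X m0 E by (simp_all add: \<epsilon>_def k_def)
  have "switch_gap d0 m0 E 1 = switch_gap d0 m0 E X + 2 * m0 * \<epsilon> * (E - 1 - X)"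
    by (simp add: switch_gap_def \<epsilon>_def algebra_simps power2_eq_square)
  also have "\<dots> \<le> k * \<epsilon>"
  proof -
    have "2 * m0 * \<epsilon> * (E - 1 - X) \<le> 2 * m0 * \<epsilon> * E"
      using m0 \<open>\<epsilon> > 0\<close> X by (intro mult_left_mono) auto
    then show ?thesis
      using gap_X by (simp add: k_def algebra_simps)
  qed
  finally have "(switch_gap d0 m0 E 1)^2 \<le> (k * \<epsilon>)^2"
    using gap_1 by (intro power_mono) auto
  then have "switch_cost d0 m0 E 1 \<le> k^2 + k^2 * \<epsilon>^2"
    by (simp add: switch_cost_def k_def power_mult_distrib)
  also have "\<dots> < (k * (1 + \<epsilon>))^2"
    using \<open>\<epsilon> > 0\<close> \<open>k > 0\<close> by (simp add: power2_eq_square algebra_simps)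
  also have "\<dots> = (2 * m0 * X * E)^2"
    by (simp add: k_def \<epsilon>_def algebra_simps)
  finally show ?thesis .
qed

lemma switch_cost_lt_at_end:
  assumes m0: "0 < m0" and E: "1 < E" and d0: "0 < d0"
  shows "\<exists>Y\<in>{1..<E}. switch_cost d0 m0 E Y < switch_cost d0 m0 E E"
proof -
  define \<epsilon> where "\<epsilon> = min (E - 1) (d0 / (2 * m0 * E))"
  define Y where "Y = E - \<epsilon>"
  have "\<epsilon> > 0"
    using E d0 m0 by (simp add: \<epsilon>_def)
  then have Y: "1 \<le> Y" "Y < E" "0 < Y"
    by (auto simp: Y_def \<epsilon>_def)
  have "2 * m0 * Y * \<epsilon> \<le> 2 * m0 * E * \<epsilon>"
    using Y m0 \<open>\<epsilon> > 0\<close> by simp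
  also have "\<dots> \<le> d0"
    using m0 E by (simp add: \<epsilon>_def min_def field_simps)
  finally have "0 \<le> switch_gap d0 m0 E Y" "switch_gap d0 m0 E Y \<le> switch_gap d0 m0 E E"
    using m0 Y \<open>\<epsilon> > 0\<close> by (simp_all add: switch_gap_def Y_def algebra_simps)
  then have "(switch_gap d0 m0 E Y)^2 \<le> (switch_gap d0 m0 E E)^2"
    by (intro power_mono)
  moreover have "(2 * m0 * Y * E)^2 < (2 * m0 * E * E)^2"
    using m0 Y E by (intro power_strict_mono) auto
  ultimately show ?thesis
    using Y by (intro bexI[of _ Y]) (auto simp: switch_cost_def)
qed

lemma switch_gap_1_pos_iff:
  assumes m0: "0 < mean x0" and order: "snd x0 \<le> fst x0"
  shows "0 < switch_gap (fst x0 - snd x0) (mean x0) (exp (T/2)) 1 \<longleftrightarrow> T < 2 * ln (fst x0 / mean x0)"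
proof -
  have "0 < fst x0"
    using m0 order by (simp add: mean_def)
  have "switch_gap (fst x0 - snd x0) (mean x0) (exp (T/2)) 1 = 2 * (fst x0 - mean x0 * exp (T/2))"
    by (simp add: switch_gap_def mean_def field_simps)
  also have "0 < \<dots> \<longleftrightarrow> exp (T/2) < fst x0 / mean x0"
    using m0 by (simp add: field_simps)
  also have "\<dots> \<longleftrightarrow> T/2 < ln (fst x0 / mean x0)"
    using m0 \<open>0 < fst x0\<close> by (metis divide_pos_pos exp_less_cancel_iff exp_ln)
  finally show ?thesis
    by linarith
qed

lemma piecewise_traj:
  fixes a1 a2 :: "real \<times> real" and P1 P2 :: "real \<Rightarrow> real \<times> real"
  assumes \<tau>: "0 \<le> \<tau>" "\<tau> \<le> T"
    and P1: "\<And>s. (P1 has_vector_derivative dyn a1 (P1 s)) (at s)"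
    and P2: "\<And>s. (P2 has_vector_derivative dyn a2 (P2 s)) (at s)"
    and glue: "P1 \<tau> = P2 \<tau>"
  shows "is_traj T (\<lambda>t. if t < \<tau> then a1 else a2) (P1 0) (\<lambda>t. if t \<le> \<tau> then P1 t else P2 t)"
  unfolding is_traj_def
proof (intro conjI ballI)
  show "(if 0 \<le> \<tau> then P1 0 else P2 0) = P1 0" using \<tau> by simp
  fix t assume t: "t \<in> {0..T}"
  let ?f = "\<lambda>s. dyn (if s < \<tau> then a1 else a2) (if s \<le> \<tau> then P1 s else P2 s)"
  have P1_int: "((\<lambda>s. dyn a1 (P1 s)) has_integral (P1 u - P1 0)) {0..u}" if "0 \<le> u" for u
    by (rule fundamental_theorem_of_calculus[OF that]) (auto intro: has_vector_derivative_at_within P1)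
  have P2_int: "((\<lambda>s. dyn a2 (P2 s)) has_integral (P2 u - P2 \<tau>)) {\<tau>..u}" if "\<tau> \<le> u" for u
    by (rule fundamental_theorem_of_calculus[OF that]) (auto intro: has_vector_derivative_at_within P2)
  have before: "(?f has_integral (P1 u - P1 0)) {0..u}" if "0 \<le> u" "u \<le> \<tau>" for u
    by (rule has_integral_spike_finite[of "{\<tau>}", OF _ _ P1_int[OF that(1)]]) (use that in auto)
  show "(?f has_integral ((if t \<le> \<tau> then P1 t else P2 t) - (if 0 \<le> \<tau> then P1 0 else P2 0))) {0..t}"
  proof (cases "t \<le> \<tau>")
    case True
    then show ?thesis using before[of t] t \<tau> by simp
  next
    case False
    have "(?f has_integral (P2 t - P2 \<tau>)) {\<tau>..t}"
      by (rule has_integral_eq[OF _ P2_int]) (use False glue in auto)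
    then have "(?f has_integral ((P1 \<tau> - P1 0) + (P2 t - P2 \<tau>))) {0..t}"
      using False \<tau> by (intro has_integral_combine[OF _ _ before]) auto
    then show ?thesis using False \<tau> glue by simp
  qed
qed

lemma piecewise_control_in_U1:
  assumes "\<forall>a\<in>{a1, a2}. 0 \<le> fst a \<and> fst a \<le> 1 \<and> 0 \<le> snd a \<and> snd a \<le> 1 \<and> fst a + snd a \<le> 1"
  shows "(\<lambda>t::real. if t < \<tau> then a1 else a2) \<in> U1 T"
  unfolding U1_def
proof (intro CollectI conjI ballI)
  have "(\<lambda>t::real. if t < \<tau> then a1 else a2) \<in> borel_measurable borel" by measurable
  then have "(\<lambda>t::real. if t < \<tau> then a1 else a2) \<in> borel_measurable lebesgue"
    by (intro measurable_completion) simp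
  then show "(\<lambda>t::real. if t < \<tau> then a1 else a2) \<in> borel_measurable (restrict_space lebesgue {0..T})"
    by (rule measurable_restrict_space1)
qed (use assms in auto)

lemma has_vector_derivative_PairI:
  fixes f g :: "real \<Rightarrow> real"
  assumes "(f has_real_derivative f') (at s)" "(g has_real_derivative g') (at s)"
  shows "((\<lambda>s. (f s, g s)) has_vector_derivative (f', g')) (at s)"
  by (rule has_vector_derivative_Pair)
     (use assms in \<open>simp_all add: has_real_derivative_iff_has_vector_derivative[symmetric]\<close>)

lemma has_vector_derivative_dyn_0_0:
  "((\<lambda>s. (c + p * exp (- s), c - p * exp (- s))) has_vector_derivative
     dyn (0, 0) (c + p * exp (- s), c - p * exp (- s))) (at s)"
proof -
  have "((\<lambda>s. (c + p * exp (- s), c - p * exp (- s))) has_vector_derivative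
      (- p * exp (- s), p * exp (- s))) (at s)"
    by (intro has_vector_derivative_PairI) (auto intro!: derivative_eq_intros)
  then show ?thesis
    by (simp add: dyn_def mean_def algebra_simps)
qed

lemma has_vector_derivative_dyn_1_0:
  "((\<lambda>s. (A * exp (- s), 2 * M * exp (- s / 2) - A * exp (- s))) has_vector_derivative
     dyn (1, 0) (A * exp (- s), 2 * M * exp (- s / 2) - A * exp (- s))) (at s)"
proof -
  have "((\<lambda>s. (A * exp (- s), 2 * M * exp (- s / 2) - A * exp (- s))) has_vector_derivative
      (- A * exp (- s), - (M * exp (- s / 2)) + A * exp (- s))) (at s)"
    by (intro has_vector_derivative_PairI) (auto intro!: derivative_eq_intros)
  then show ?thesis
    by (simp add: dyn_def mean_def algebra_simps)
qed

lemma has_vector_derivative_dyn_half: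
  "((\<lambda>s. (M * exp (- s / 2), M * exp (- s / 2))) has_vector_derivative
     dyn (1/2, 1/2) (M * exp (- s / 2), M * exp (- s / 2))) (at s)"
proof -
  have "((\<lambda>s. (M * exp (- s / 2), M * exp (- s / 2))) has_vector_derivative
      (- (M * exp (- s / 2)) / 2, - (M * exp (- s / 2)) / 2)) (at s)"
    by (intro has_vector_derivative_PairI) (auto intro!: derivative_eq_intros)
  then show ?thesis
    by (simp add: dyn_def mean_def algebra_simps)
qed

lemma exp_half_sq: "exp (x / 2) ^ 2 = exp (x :: real)"
  using mult_exp_exp[of "x / 2" "x / 2"] by (simp add: power2_eq_square)

lemma exp_facts_half:
  fixes T :: real
  shows "exp (- T) = 1 / exp (T/2)^2" "exp (- (T / 2)) = 1 / exp (T/2)" "exp (2 * T) = (exp (T/2)^2)^2"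
  using mult_exp_exp[of T T]
  by (simp_all add: exp_half_sq exp_minus inverse_eq_divide power2_eq_square[of "exp T"])

lemma switching_control_cost:
  assumes Y: "1 \<le> Y" "Y \<le> exp (T/2)"
  shows "\<exists>\<eta>. is_traj T (\<lambda>t. if t < 2 * ln Y then (0, 0) else (1, 0)) x0 \<eta> \<and>
    4 * exp (2 * T) * cost (\<eta> T) = switch_cost (fst x0 - snd x0) (mean x0) (exp (T/2)) Y"
proof -
  define p m0 E K \<tau> where "p = fst x0" and "m0 = mean x0" and "E = exp (T/2)"
    and "K = m0 * Y^2 + p - m0" and "\<tau> = 2 * ln Y"
  define P1 where "P1 = (\<lambda>s. (m0 + (p - m0) * exp (- s), m0 - (p - m0) * exp (- s)))"
  define P2 where "P2 = (\<lambda>s. (K * exp (- s), 2 * (m0 * Y) * exp (- s / 2) - K * exp (- s)))"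
  have \<tau>: "0 \<le> \<tau>" "\<tau> \<le> T"
    using Y ln_le_cancel_iff[of Y "exp (T/2)"] by (auto simp: \<tau>_def)
  have exp_\<tau>_half: "exp (- (\<tau> / 2)) = 1 / Y"
    using Y by (simp add: \<tau>_def exp_minus inverse_eq_divide)
  have exp_\<tau>: "exp (- \<tau>) = 1 / Y^2"
    using exp_half_sq[of "- \<tau>"] exp_\<tau>_half by (simp add: power_divide)
  have glue: "P1 \<tau> = P2 \<tau>"
    using Y by (simp add: P1_def P2_def K_def exp_\<tau>_half exp_\<tau> field_simps power2_eq_square)
  have P1: "(P1 has_vector_derivative dyn (0, 0) (P1 s)) (at s)" for s
    unfolding P1_def by (rule has_vector_derivative_dyn_0_0)
  have P2: "(P2 has_vector_derivative dyn (1, 0) (P2 s)) (at s)" for s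
    unfolding P2_def by (rule has_vector_derivative_dyn_1_0)
  have "P1 0 = x0"
    by (simp add: P1_def p_def m0_def mean_def prod_eq_iff)
  then have traj: "is_traj T (\<lambda>t. if t < \<tau> then (0, 0) else (1, 0)) x0 (\<lambda>t. if t \<le> \<tau> then P1 t else P2 t)"
    using piecewise_traj[OF \<tau> P1 P2 glue] by simp
  have d0: "fst x0 - snd x0 = 2 * (p - m0)"
    by (simp add: p_def m0_def mean_def field_simps)
  have P2_T: "P2 T = (K / E^2, 2 * (m0 * Y) / E - K / E^2)"
    by (simp add: P2_def E_def exp_facts_half(1,2)[of T])
  have "4 * exp (2 * T) * cost (P2 T) = switch_cost (fst x0 - snd x0) m0 E Y"
    unfolding exp_facts_half(3) E_def[symmetric] d0 P2_T cost_def switch_cost_def switch_gap_def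
    by (simp add: K_def E_def field_simps power2_eq_square)
  moreover have "(if T \<le> \<tau> then P1 T else P2 T) = P2 T"
    using glue \<tau> by auto
  ultimately show ?thesis
    using traj by (intro exI[of _ "\<lambda>t. if t \<le> \<tau> then P1 t else P2 t"]) (simp add: \<tau>_def m0_def E_def)
qed

lemma turnpike_control_cost:
  assumes m0: "mean x0 > 0" and order: "snd x0 \<le> fst x0"
    and t0: "2 * ln (fst x0 / mean x0) \<le> T"
  shows "\<exists>\<eta>. is_traj T (\<lambda>t. if t < 2 * ln (fst x0 / mean x0) then (1, 0) else (1/2, 1/2)) x0 \<eta> \<and>
    4 * exp (2 * T) * cost (\<eta> T) = (2 * mean x0 * exp (T/2))^2"
proof -
  define p m0 \<tau> where "p = fst x0" and "m0 = mean x0" and "\<tau> = 2 * ln (fst x0 / mean x0)"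
  define P1 where "P1 = (\<lambda>s. (p * exp (- s), 2 * m0 * exp (- s / 2) - p * exp (- s)))"
  define P2 where "P2 = (\<lambda>s. (m0 * exp (- s / 2), m0 * exp (- s / 2)))"
  have "m0 \<le> p" "0 < m0"
    using m0 order by (simp_all add: p_def m0_def mean_def)
  then have \<tau>: "0 \<le> \<tau>" "\<tau> \<le> T"
    using t0 by (auto simp: \<tau>_def p_def m0_def)
  have exp_\<tau>_half: "exp (- (\<tau> / 2)) = m0 / p"
    using \<open>m0 \<le> p\<close> \<open>0 < m0\<close> by (simp add: \<tau>_def p_def m0_def exp_minus inverse_eq_divide)
  have exp_\<tau>: "exp (- \<tau>) = (m0 / p)^2"
    using exp_half_sq[of "- \<tau>"] exp_\<tau>_half by simp
  have glue: "P1 \<tau> = P2 \<tau>"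
    using \<open>m0 \<le> p\<close> \<open>0 < m0\<close>
    by (simp add: P1_def P2_def exp_\<tau>_half exp_\<tau> field_simps power2_eq_square)
  have P1: "(P1 has_vector_derivative dyn (1, 0) (P1 s)) (at s)" for s
    unfolding P1_def by (rule has_vector_derivative_dyn_1_0)
  have P2: "(P2 has_vector_derivative dyn (1/2, 1/2) (P2 s)) (at s)" for s
    unfolding P2_def by (rule has_vector_derivative_dyn_half)
  have "P1 0 = x0"
    by (simp add: P1_def p_def m0_def mean_def prod_eq_iff field_simps)
  then have traj: "is_traj T (\<lambda>t. if t < \<tau> then (1, 0) else (1/2, 1/2)) x0
      (\<lambda>t. if t \<le> \<tau> then P1 t else P2 t)"
    using piecewise_traj[OF \<tau> P1 P2 glue] by simp
  have "4 * exp (2 * T) * cost (P2 T) = (2 * m0 * exp (T/2))^2"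
    unfolding exp_facts_half(3) P2_def cost_def
    by (simp add: exp_facts_half(2)[of T] field_simps power2_eq_square)
  moreover have "(if T \<le> \<tau> then P1 T else P2 T) = P2 T"
    using glue \<tau> by auto
  ultimately show ?thesis
    using traj by (intro exI[of _ "\<lambda>t. if t \<le> \<tau> then P1 t else P2 t"]) (simp add: \<tau>_def m0_def)
qed

section \<open>Admissible trajectories\<close>

lemma bounded_linear_mean: "bounded_linear mean"
  unfolding mean_def
  by (rule bounded_linear_compose[OF bounded_linear_divide[of 2]])
     (intro bounded_linear_add bounded_linear_fst bounded_linear_snd)

lemma mean_diff: "mean (x - y) = mean x - mean y"
  by (simp add: mean_def field_simps)

lemma norm_dyn_le:
  assumes "0 \<le> fst a" "fst a \<le> 1" "0 \<le> snd a" "snd a \<le> 1"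
  shows "norm (dyn a x) \<le> 4 * norm x"
proof -
  have mean: "\<bar>mean x\<bar> \<le> norm x"
    using norm_fst_le[of "fst x" "snd x"] norm_snd_le[of "snd x" "fst x"]
    by (simp add: mean_def)
  have "\<bar>- c + (1 - a') * mean x\<bar> \<le> 2 * norm x" if "\<bar>c\<bar> \<le> norm x" "0 \<le> a'" "a' \<le> 1" for c a'
  proof -
    have "\<bar>(1 - a') * mean x\<bar> \<le> 1 * norm x"
      unfolding abs_mult using that mean by (intro mult_mono) auto
    then show ?thesis using that(1) by linarith
  qed
  then have "\<bar>fst (dyn a x)\<bar> \<le> 2 * norm x" "\<bar>snd (dyn a x)\<bar> \<le> 2 * norm x"
    using assms norm_fst_le[of "fst x" "snd x"] norm_snd_le[of "snd x" "fst x"]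
    by (auto simp: dyn_def)
  then show ?thesis
    using norm_Pair_le[of "fst (dyn a x)" "snd (dyn a x)"] by simp
qed

locale controlled_trajectory =
  fixes T :: real and x0 :: "real \<times> real" and \<beta> \<eta> :: "real \<Rightarrow> real \<times> real"
  assumes T_pos: "T > 0" and mean_x0_pos: "mean x0 > 0"
    and control: "\<beta> \<in> U1 T" and traj: "is_traj T \<beta> x0 \<eta>"
begin

definition "m t = mean (\<eta> t)"
definition "d t = fst (\<eta> t) - snd (\<eta> t)"
definition "b t = (fst (\<beta> t) + snd (\<beta> t)) / 2"
abbreviation "m0 \<equiv> mean x0"
abbreviation "d0 \<equiv> fst x0 - snd x0"

lemma control_bounds:
  assumes "t \<in> {0..T}"
  shows "0 \<le> fst (\<beta> t)" "fst (\<beta> t) \<le> 1" "0 \<le> snd (\<beta> t)" "snd (\<beta> t) \<le> 1"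
    "fst (\<beta> t) + snd (\<beta> t) \<le> 1"
  using control assms by (auto simp: U1_def)

lemma b_bounds: "t \<in> {0..T} \<Longrightarrow> 0 \<le> b t \<and> b t \<le> 1/2"
  using control_bounds[of t] by (auto simp: b_def)

lemma traj_has_integral: "t \<in> {0..T} \<Longrightarrow> ((\<lambda>s. dyn (\<beta> s) (\<eta> s)) has_integral (\<eta> t - x0)) {0..t}"
  using traj by (auto simp: is_traj_def)

lemma traj_continuous: "continuous_on {0..T} \<eta>"
proof -
  have "(\<lambda>s. dyn (\<beta> s) (\<eta> s)) integrable_on {0..T}"
    using traj_has_integral[of T] T_pos by (auto simp: has_integral_integrable)
  then have "continuous_on {0..T} (\<lambda>t. x0 + integral {0..t} (\<lambda>s. dyn (\<beta> s) (\<eta> s)))"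
    by (intro continuous_intros indefinite_integral_continuous_1)
  moreover have "x0 + integral {0..t} (\<lambda>s. dyn (\<beta> s) (\<eta> s)) = \<eta> t" if "t \<in> {0..T}" for t
    using integral_unique[OF traj_has_integral[OF that]] by simp
  ultimately show ?thesis
    using continuous_on_eq by blast
qed

lemma dyn_absolutely_integrable: "(\<lambda>s. dyn (\<beta> s) (\<eta> s)) absolutely_integrable_on {0..T}"
proof -
  obtain B where B: "\<And>t. t \<in> {0..T} \<Longrightarrow> norm (\<eta> t) \<le> B"
    using continuous_on_compact_bound[OF compact_Icc traj_continuous] by blast
  show ?thesis
  proof (rule absolutely_integrable_integrable_bound[of _ _ "\<lambda>_. 4 * B"])
    show "(\<lambda>s. dyn (\<beta> s) (\<eta> s)) integrable_on {0..T}"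
      using traj_has_integral[of T] T_pos by (auto simp: has_integral_integrable)
    show "norm (dyn (\<beta> s) (\<eta> s)) \<le> 4 * B" if "s \<in> {0..T}" for s
      using norm_dyn_le[OF control_bounds(1-4)[OF that], of "\<eta> s"] B[OF that] by simp
  qed auto
qed

lemma traj_start: "\<eta> 0 = x0"
  using traj by (simp add: is_traj_def)

lemma m_0: "m 0 = m0" and d_0: "d 0 = d0"
  by (simp_all add: m_def d_def traj_start)

lemma mean_comp_dyn: "mean \<circ> (\<lambda>s. dyn (\<beta> s) (\<eta> s)) = (\<lambda>s. - b s * m s)"
  by (simp add: fun_eq_iff mean_def dyn_def b_def m_def field_simps)

lemma diff_comp_dyn:
  "(\<lambda>x. fst x - snd x) \<circ> (\<lambda>s. dyn (\<beta> s) (\<eta> s)) = (\<lambda>s. - d s + (snd (\<beta> s) - fst (\<beta> s)) * m s)"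
  by (simp add: fun_eq_iff dyn_def d_def m_def algebra_simps)

lemma m_has_integral: "t \<in> {0..T} \<Longrightarrow> ((\<lambda>s. - b s * m s) has_integral (m t - m 0)) {0..t}"
  using has_integral_linear[OF traj_has_integral bounded_linear_mean, of t]
  by (simp add: mean_comp_dyn mean_diff m_def traj_start)

lemma d_has_integral:
  "t \<in> {0..T} \<Longrightarrow> ((\<lambda>s. - d s + (snd (\<beta> s) - fst (\<beta> s)) * m s) has_integral (d t - d 0)) {0..t}"
  using has_integral_linear[OF traj_has_integral bounded_linear_sub[OF bounded_linear_fst bounded_linear_snd], of t]
  by (simp add: diff_comp_dyn d_def traj_start algebra_simps)

lemma m_deriv_absolutely_integrable: "(\<lambda>s. - b s * m s) absolutely_integrable_on {0..T}"
  using absolutely_integrable_linear[OF dyn_absolutely_integrable bounded_linear_mean]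
  by (simp add: mean_comp_dyn)

lemma d_deriv_absolutely_integrable:
  "(\<lambda>s. - d s + (snd (\<beta> s) - fst (\<beta> s)) * m s) absolutely_integrable_on {0..T}"
  using absolutely_integrable_linear[OF dyn_absolutely_integrable
      bounded_linear_sub[OF bounded_linear_fst bounded_linear_snd]]
  by (simp add: diff_comp_dyn)

lemma exp_m_has_integral:
  assumes t: "t \<in> {0..T}"
  shows "((\<lambda>s. exp (c * s) * (c - b s) * m s) has_integral (exp (c * t) * m t - m0)) {0..t}"
proof -
  have "((\<lambda>s. exp (c * s) * (c * m s + - b s * m s)) has_integral (exp (c * t) * m t - exp (c * 0) * m 0)) {0..t}"
  proof (rule has_integral_exp_mult)
    show "(\<lambda>s. - b s * m s) absolutely_integrable_on {0..t}"
      using absolutely_integrable_on_subcbox[OF m_deriv_absolutely_integrable, of 0 t] t by auto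
  qed (use t m_has_integral in auto)
  then show ?thesis
    by (simp add: m_0 algebra_simps)
qed

lemma exp_d_has_integral:
  assumes t: "t \<in> {0..T}"
  shows "((\<lambda>s. exp s * (snd (\<beta> s) - fst (\<beta> s)) * m s) has_integral (exp t * d t - d0)) {0..t}"
proof -
  have "((\<lambda>s. exp (1 * s) * (1 * d s + (- d s + (snd (\<beta> s) - fst (\<beta> s)) * m s))) has_integral
      (exp (1 * t) * d t - exp (1 * 0) * d 0)) {0..t}"
  proof (rule has_integral_exp_mult)
    show "(\<lambda>s. - d s + (snd (\<beta> s) - fst (\<beta> s)) * m s) absolutely_integrable_on {0..t}"
      using absolutely_integrable_on_subcbox[OF d_deriv_absolutely_integrable, of 0 t] t by auto
  qed (use t d_has_integral in auto)
  then show ?thesis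
    by (simp add: d_0 algebra_simps)
qed

lemma m_continuous: "continuous_on {0..T} m"
  unfolding m_def mean_def by (intro continuous_intros traj_continuous) auto

text \<open>Up to the first zero \<open>t1\<close> of \<open>m\<close>, the function \<open>exp (t/2) * m t\<close> is nondecreasing, so it
  cannot drop from \<open>m0 > 0\<close> to \<open>0\<close>.\<close>

lemma m_pos: "t \<in> {0..T} \<Longrightarrow> m t > 0"
proof (rule ccontr)
  assume t: "t \<in> {0..T}" and "\<not> m t > 0"
  define S where "S = {0..T} \<inter> m -` {..0}"
  have "closed S"
    unfolding S_def by (rule continuous_closed_preimage[OF m_continuous]) auto
  moreover have "t \<in> S" "bdd_below S"
    using t \<open>\<not> m t > 0\<close> by (auto simp: S_def bdd_below_def)
  ultimately have t1: "Inf S \<in> S" and first: "\<And>s. s \<in> S \<Longrightarrow> Inf S \<le> s"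
    using closed_contains_Inf cInf_lower by blast+
  define t1 where "t1 = Inf S"
  have t1T: "t1 \<in> {0..T}" and "m t1 \<le> 0"
    using t1 by (auto simp: S_def t1_def)
  obtain x where x: "0 \<le> x" "x \<le> t1" "m x = 0"
    using IVT2'[of m t1 0 0] m_0 mean_x0_pos \<open>m t1 \<le> 0\<close> t1T continuous_on_subset[OF m_continuous]
    by auto
  then have "x \<in> S"
    using t1T by (auto simp: S_def)
  then have "m t1 = 0"
    using first x by (force simp: t1_def)
  have nonneg: "m s \<ge> 0" if "s \<in> {0..t1}" for s
  proof (rule ccontr)
    assume "\<not> m s \<ge> 0"
    then have "s \<in> S" using that t1T by (auto simp: S_def)
    then have "s = t1" using first that by (force simp: t1_def)
    then show False using \<open>m t1 = 0\<close> \<open>\<not> m s \<ge> 0\<close> by simp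
  qed
  have "0 \<le> exp (1/2 * t1) * m t1 - m0"
  proof (rule has_integral_nonneg[OF exp_m_has_integral[OF t1T, of "1/2"]])
    show "0 \<le> exp (1/2 * s) * (1/2 - b s) * m s" if "s \<in> {0..t1}" for s
      using that t1T b_bounds[of s] nonneg[OF that] by auto
  qed
  then show False
    using \<open>m t1 = 0\<close> mean_x0_pos by simp
qed

lemma m_nonneg: "t \<in> {0..T} \<Longrightarrow> m t \<ge> 0"
  using m_pos less_imp_le by blast

lemma m_le_m0:
  assumes t: "t \<in> {0..T}"
  shows "m t \<le> m0"
proof -
  have "((\<lambda>s. b s * m s) has_integral (m0 - m t)) {0..t}"
    using has_integral_neg[OF m_has_integral[OF t]] by (simp add: m_0)
  then have "0 \<le> m0 - m t"
  proof (rule has_integral_nonneg)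
    show "0 \<le> b s * m s" if "s \<in> {0..t}" for s
      using that t b_bounds[of s] m_pos[of s] by simp
  qed
  then show ?thesis by simp
qed

lemma exp_half_m_mono:
  assumes "s \<in> {0..T}" "t \<in> {0..T}" "s \<le> t"
  shows "exp (s/2) * m s \<le> exp (t/2) * m t"
proof -
  define f where "f = (\<lambda>r. exp (r/2) * (1/2 - b r) * m r)"
  have "(f has_integral (exp (t/2) * m t - m0)) {0..t}" "(f has_integral (exp (s/2) * m s - m0)) {0..s}"
    using exp_m_has_integral[OF assms(2), of "1/2"] exp_m_has_integral[OF assms(1), of "1/2"]
    by (simp_all add: f_def)
  from has_integral_Icc_diff[OF this] assms
  have "(f has_integral (exp (t/2) * m t - exp (s/2) * m s)) {s..t}"
    by simp
  then have "0 \<le> exp (t/2) * m t - exp (s/2) * m s"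
  proof (rule has_integral_nonneg)
    show "0 \<le> f r" if "r \<in> {s..t}" for r
    proof -
      have "r \<in> {0..T}" using that assms by auto
      then show ?thesis
        using b_bounds[of r] m_pos[of r] by (simp add: f_def)
    qed
  qed
  then show ?thesis by simp
qed

definition "X = exp (T/2) * m T / m0"
definition "\<tau> = 2 * ln X"
definition "z s = exp s * m s"

lemma X_ge_1: "X \<ge> 1"
  using exp_half_m_mono[of 0 T] T_pos mean_x0_pos by (simp add: X_def m_0)

lemma X_le_exp: "X \<le> exp (T/2)"
  using m_le_m0[of T] T_pos mean_x0_pos by (simp add: X_def divide_le_eq)

lemma exp_tau_half: "exp (\<tau>/2) = X"
  using X_ge_1 by (simp add: \<tau>_def)

lemma exp_tau: "exp \<tau> = X^2"
  using exp_half_sq[of \<tau>] exp_tau_half by simp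

lemma tau_in: "\<tau> \<in> {0..T}"
  using X_ge_1 X_le_exp ln_le_cancel_iff[of X "exp (T/2)"] by (simp add: \<tau>_def)

lemma z_continuous: "continuous_on {0..T} z"
  unfolding z_def by (intro continuous_intros m_continuous)

text \<open>The two bounds on \<open>z\<close> come from \<open>m \<le> m0\<close> and from the monotonicity of \<open>exp (t/2) * m t\<close>;
  they cross at \<open>\<tau>\<close>.\<close>

lemma z_le_exp: "s \<in> {0..T} \<Longrightarrow> z s \<le> m0 * exp s"
  using m_le_m0[of s] by (simp add: z_def)

lemma z_le_exp_half: "s \<in> {0..T} \<Longrightarrow> z s \<le> m0 * X * exp (s/2)"
proof -
  assume s: "s \<in> {0..T}"
  have "exp (s/2) * m s \<le> m0 * X"
    using exp_half_m_mono[OF s, of T] s T_pos mean_x0_pos by (auto simp: X_def)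
  then have "exp (s/2) * (exp (s/2) * m s) \<le> exp (s/2) * (m0 * X)"
    by simp
  moreover have "z s = exp (s/2) * (exp (s/2) * m s)"
    using exp_half_sq[of s] by (simp add: z_def power2_eq_square)
  ultimately show ?thesis
    by (simp add: algebra_simps)
qed

text \<open>The slacks vanish for the control that is \<open>(0, 0)\<close> before \<open>\<tau>\<close> and \<open>(1, 0)\<close> after it.\<close>

definition "slack_snd = integral {0..T} (\<lambda>s. exp s * (2 * snd (\<beta> s)) * m s)"
definition "slack_early = integral {0..\<tau>} (\<lambda>s. m0 * exp s - z s)"
definition "slack_late = integral {\<tau>..T} (\<lambda>s. m0 * X * exp (s/2) - z s)"

lemma slack_snd_has_integral:
  "((\<lambda>s. exp s * (2 * snd (\<beta> s)) * m s) has_integral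
     ((exp T * d T - d0) + 2 * (integral {0..T} z - (exp T * m T - m0)))) {0..T}"
proof -
  have "(z has_integral integral {0..T} z) {0..T}"
    by (rule integrable_integral[OF integrable_continuous_real[OF z_continuous]])
  then have "((\<lambda>s. exp s * (snd (\<beta> s) - fst (\<beta> s)) * m s + 2 * (z s - exp (1 * s) * (1 - b s) * m s))
      has_integral ((exp T * d T - d0) + 2 * (integral {0..T} z - (exp (1 * T) * m T - m0)))) {0..T}"
    using T_pos by (intro has_integral_add has_integral_mult_right has_integral_diff exp_d_has_integral
        exp_m_has_integral) auto
  moreover have "exp s * (snd (\<beta> s) - fst (\<beta> s)) * m s + 2 * (z s - exp (1 * s) * (1 - b s) * m s)
      = exp s * (2 * snd (\<beta> s)) * m s" for s
    by (simp add: z_def b_def algebra_simps)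
  ultimately show ?thesis
    by simp
qed

lemma slack_early_has_integral: "((\<lambda>s. m0 * exp s - z s) has_integral slack_early) {0..\<tau>}"
  unfolding slack_early_def using tau_in
  by (intro integrable_integral integrable_diff integrable_continuous_real continuous_intros
      continuous_on_subset[OF z_continuous]) auto

lemma slack_late_has_integral: "((\<lambda>s. m0 * X * exp (s/2) - z s) has_integral slack_late) {\<tau>..T}"
  unfolding slack_late_def using tau_in
  by (intro integrable_integral integrable_diff integrable_continuous_real continuous_intros
      continuous_on_subset[OF z_continuous]) auto

lemma slack_snd_nonneg: "slack_snd \<ge> 0"
proof -
  have "0 \<le> exp s * (2 * snd (\<beta> s)) * m s" if "s \<in> {0..T}" for s
    using control_bounds(3)[OF that] m_pos[OF that] by (intro mult_nonneg_nonneg) auto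
  then show ?thesis
    unfolding slack_snd_def
    by (intro integral_nonneg has_integral_integrable[OF slack_snd_has_integral]) auto
qed

lemma slack_early_nonneg: "slack_early \<ge> 0"
  using slack_early_has_integral by (rule has_integral_nonneg) (use tau_in z_le_exp in auto)

lemma slack_late_nonneg: "slack_late \<ge> 0"
  using slack_late_has_integral by (rule has_integral_nonneg) (use tau_in z_le_exp_half in auto)

lemma gap_decomposition:
  "exp T * d T = switch_gap d0 m0 (exp (T/2)) X + slack_snd + 2 * slack_early + 2 * slack_late"
proof -
  have "integral {0..\<tau>} z + integral {\<tau>..T} z = integral {0..T} z"
    using Henstock_Kurzweil_Integration.integral_combine[of 0 \<tau> T z] tau_in
      integrable_continuous_real[OF z_continuous] by auto
  moreover have "((\<lambda>s. m0 * exp s) has_integral (m0 * exp \<tau> - m0 * exp 0)) {0..\<tau>}"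
    using tau_in by (intro has_integral_of_real_derivative) (auto intro!: derivative_eq_intros)
  then have "((\<lambda>s. m0 * exp s - (m0 * exp s - z s)) has_integral
      (m0 * exp \<tau> - m0 * exp 0 - slack_early)) {0..\<tau>}"
    by (intro has_integral_diff slack_early_has_integral)
  then have "integral {0..\<tau>} z = m0 * X^2 - m0 - slack_early"
    using exp_tau by (simp add: integral_unique)
  moreover have "((\<lambda>s. m0 * X * exp (s/2)) has_integral
      (2 * m0 * X * exp (T/2) - 2 * m0 * X * exp (\<tau>/2))) {\<tau>..T}"
    using tau_in by (intro has_integral_of_real_derivative) (auto intro!: derivative_eq_intros)
  then have "((\<lambda>s. m0 * X * exp (s/2) - (m0 * X * exp (s/2) - z s)) has_integral
      (2 * m0 * X * exp (T/2) - 2 * m0 * X * exp (\<tau>/2) - slack_late)) {\<tau>..T}"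
    by (intro has_integral_diff slack_late_has_integral)
  then have "integral {\<tau>..T} z = 2 * m0 * X * exp (T/2) - 2 * m0 * X^2 - slack_late"
    using exp_tau_half by (simp add: integral_unique power2_eq_square)
  moreover have "exp T * m T = m0 * X * exp (T/2)"
    using mult_exp_exp[of "T/2" "T/2"] mean_x0_pos by (simp add: X_def)
  ultimately show ?thesis
    using integral_unique[OF slack_snd_has_integral]
    by (simp add: slack_snd_def switch_gap_def algebra_simps power2_eq_square)
qed

lemma scaled_cost_eq:
  "4 * exp (2 * T) * cost (\<eta> T) = (2 * m0 * X * exp (T/2))^2 + (exp T * d T)^2"
proof -
  have "exp T * (fst (\<eta> T) + snd (\<eta> T)) = 2 * m0 * X * exp (T/2)"
    using mult_exp_exp[of "T/2" "T/2"] mean_x0_pos by (simp add: X_def m_def mean_def)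
  moreover have "exp (2 * T) = exp T * exp T"
    using mult_exp_exp[of T T] by simp
  then have "4 * exp (2 * T) * cost (\<eta> T) = (exp T * (fst (\<eta> T) + snd (\<eta> T)))^2 + (exp T * d T)^2"
    by (simp add: cost_def d_def power2_eq_square algebra_simps)
  ultimately show ?thesis
    by simp
qed

lemma scaled_cost_ge: "4 * exp (2 * T) * cost (\<eta> T) \<ge> (2 * m0 * exp (T/2))^2"
proof -
  have "2 * m0 * exp (T/2) \<le> 2 * m0 * X * exp (T/2)"
    using X_ge_1 mean_x0_pos by simp
  then have "(2 * m0 * exp (T/2))^2 \<le> (2 * m0 * X * exp (T/2))^2"
    using mean_x0_pos by (intro power_mono) auto
  then show ?thesis
    unfolding scaled_cost_eq by (simp add: add_increasing2)
qed

lemma AE_control_sum_eq_1_of_X_eq_1: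
  assumes "X = 1"
  shows "AE t in lborel. t \<in> {0..T} \<longrightarrow> fst (\<beta> t) + snd (\<beta> t) = 1"
proof -
  have "((\<lambda>s. exp (1/2 * s) * (1/2 - b s) * m s) has_integral 0) {0..T}"
    using exp_m_has_integral[of T "1/2"] T_pos assms mean_x0_pos by (simp add: X_def)
  then have "AE s in lborel. s \<in> {0..T} \<longrightarrow> exp (1/2 * s) * (1/2 - b s) * m s = 0"
    by (rule has_integral_0_nonneg_AE_eq_0) (use b_bounds m_nonneg in \<open>auto intro!: mult_nonneg_nonneg\<close>)
  then show ?thesis
    by eventually_elim (use m_pos in \<open>fastforce simp: b_def\<close>)
qed

lemma m_eq_of_X_eq_1:
  assumes "X = 1" "t \<in> {0..T}"
  shows "m t = m0 * exp (- t / 2)"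
proof -
  have "exp (T/2) * m T = m0"
    using assms mean_x0_pos by (simp add: X_def)
  then have "exp (t/2) * m t = m0"
    using exp_half_m_mono[of 0 t] exp_half_m_mono[of t T] assms(2) by (simp add: m_0)
  then show ?thesis
    by (simp add: exp_minus field_simps)
qed

lemma AE_snd_control_eq_0_of_slack_snd_eq_0:
  assumes "slack_snd = 0"
  shows "AE t in lborel. t \<in> {0..T} \<longrightarrow> snd (\<beta> t) = 0"
proof -
  have "((\<lambda>s. exp s * (2 * snd (\<beta> s)) * m s) has_integral 0) {0..T}"
    using slack_snd_has_integral assms integral_unique[OF slack_snd_has_integral]
    by (simp add: slack_snd_def)
  then have "AE s in lborel. s \<in> {0..T} \<longrightarrow> exp s * (2 * snd (\<beta> s)) * m s = 0"
    by (rule has_integral_0_nonneg_AE_eq_0) (use control_bounds m_nonneg in \<open>auto intro!: mult_nonneg_nonneg\<close>)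
  then show ?thesis
    by eventually_elim (use m_pos in fastforce)
qed

lemma m_tau_eq_of_slack_early_eq_0:
  assumes "slack_early = 0"
  shows "m \<tau> = m0"
proof (cases "\<tau> = 0")
  case False
  then have "(\<lambda>s. m0 * exp s - z s) \<tau> = 0"
    using tau_in slack_early_has_integral assms z_le_exp
    by (intro has_integral_0_cbox_imp_0[of 0 \<tau>] continuous_intros continuous_on_subset[OF z_continuous])
       auto
  then show ?thesis by (simp add: z_def)
qed (simp add: m_0)

lemma AE_control_eq_0_before_tau:
  assumes "slack_early = 0"
  shows "AE t in lborel. t \<in> {0..\<tau>} \<longrightarrow> \<beta> t = (0, 0)"
proof -
  have "((\<lambda>s. b s * m s) has_integral 0) {0..\<tau>}"
    using has_integral_neg[OF m_has_integral[OF tau_in]] m_tau_eq_of_slack_early_eq_0[OF assms]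
    by (simp add: m_0)
  then have "AE s in lborel. s \<in> {0..\<tau>} \<longrightarrow> b s * m s = 0"
    by (rule has_integral_0_nonneg_AE_eq_0) (use b_bounds m_nonneg tau_in in \<open>auto intro!: mult_nonneg_nonneg\<close>)
  then show ?thesis
    by eventually_elim (use tau_in m_pos control_bounds in \<open>force simp: b_def prod_eq_iff\<close>)
qed

text \<open>Since \<open>exp (\<tau>/2) * m \<tau> = m0 * X = exp (T/2) * m T\<close>, the nondecreasing function
  \<open>exp (t/2) * m t\<close> is constant on \<open>[\<tau>, T]\<close>.\<close>

lemma AE_control_sum_eq_1_after_tau:
  assumes "slack_early = 0"
  shows "AE t in lborel. t \<in> {\<tau>..T} \<longrightarrow> fst (\<beta> t) + snd (\<beta> t) = 1"
proof -
  define f where "f = (\<lambda>s. exp (1/2 * s) * (1/2 - b s) * m s)"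
  have "(f has_integral (m0 * X - m0)) {0..T}" "(f has_integral (m0 * X - m0)) {0..\<tau>}"
    using exp_m_has_integral[of T "1/2"] exp_m_has_integral[OF tau_in, of "1/2"] T_pos exp_tau_half
      m_tau_eq_of_slack_early_eq_0[OF assms] mean_x0_pos by (simp_all add: f_def X_def)
  from has_integral_Icc_diff[OF this] tau_in
  have "(f has_integral 0) {\<tau>..T}"
    by simp
  then have "AE s in lborel. s \<in> {\<tau>..T} \<longrightarrow> f s = 0"
    by (rule has_integral_0_nonneg_AE_eq_0) (use b_bounds m_nonneg tau_in in \<open>auto simp: f_def intro!: mult_nonneg_nonneg\<close>)
  then show ?thesis
  proof eventually_elim
    case (elim t)
    show ?case
    proof
      assume t: "t \<in> {\<tau>..T}"
      then have "m t > 0"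
        using tau_in m_pos[of t] by auto
      with elim t show "fst (\<beta> t) + snd (\<beta> t) = 1"
        by (auto simp: f_def b_def)
    qed
  qed
qed

end

section \<open>Optimal trajectories\<close>

lemma turnpike_control_optimal:
  assumes T: "T > 0" and m0: "mean x0 > 0" and order: "snd x0 \<le> fst x0"
    and t0: "2 * ln (fst x0 / mean x0) \<le> T"
  shows "optimal_control T x0 (\<lambda>t. if t < 2 * ln (fst x0 / mean x0) then (1, 0) else (1/2, 1/2))"
proof -
  obtain \<eta> where traj: "is_traj T (\<lambda>t. if t < 2 * ln (fst x0 / mean x0) then (1, 0) else (1/2, 1/2)) x0 \<eta>"
    and cost: "4 * exp (2 * T) * cost (\<eta> T) = (2 * mean x0 * exp (T/2))^2"
    using turnpike_control_cost[OF m0 order t0] by blast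
  have "cost (\<eta> T) \<le> cost (\<eta>' T)" if "\<beta> \<in> U1 T" "is_traj T \<beta> x0 \<eta>'" for \<beta> \<eta>'
  proof -
    interpret controlled_trajectory T x0 \<beta> \<eta>'
      using T m0 that by unfold_locales
    have "4 * exp (2 * T) * cost (\<eta> T) \<le> 4 * exp (2 * T) * cost (\<eta>' T)"
      using scaled_cost_ge cost by simp
    then show ?thesis
      by simp
  qed
  then show ?thesis
    unfolding optimal_control_def optimal_pair_def
    using traj by (intro exI[of _ \<eta>] conjI piecewise_control_in_U1) auto
qed

locale optimal_trajectory = controlled_trajectory +
  assumes optimal: "\<And>\<beta>' \<eta>'. \<beta>' \<in> U1 T \<Longrightarrow> is_traj T \<beta>' x0 \<eta>' \<Longrightarrow> cost (\<eta> T) \<le> cost (\<eta>' T)"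
begin

lemma scaled_cost_le:
  "\<beta>' \<in> U1 T \<Longrightarrow> is_traj T \<beta>' x0 \<eta>' \<Longrightarrow> 4 * exp (2 * T) * cost (\<eta> T) \<le> 4 * exp (2 * T) * cost (\<eta>' T)"
  using optimal by simp

lemma scaled_cost_le_switch_cost:
  assumes "Y \<in> {1..exp (T/2)}"
  shows "4 * exp (2 * T) * cost (\<eta> T) \<le> switch_cost d0 m0 (exp (T/2)) Y"
proof -
  obtain \<eta>' where traj: "is_traj T (\<lambda>t. if t < 2 * ln Y then (0, 0) else (1, 0)) x0 \<eta>'"
    and cost: "4 * exp (2 * T) * cost (\<eta>' T) = switch_cost d0 m0 (exp (T/2)) Y"
    using switching_control_cost[of Y T x0] assms by auto
  have "(\<lambda>t. if t < 2 * ln Y then (0::real, 0::real) else (1, 0)) \<in> U1 T"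
    by (rule piecewise_control_in_U1) auto
  from scaled_cost_le[OF this traj] show ?thesis
    unfolding cost .
qed

lemma long_horizon:
  assumes order: "snd x0 \<le> fst x0" and t0: "2 * ln (fst x0 / m0) \<le> T"
  shows "d T = 0" and "X = 1"
proof -
  obtain \<eta>' where traj: "is_traj T (\<lambda>t. if t < 2 * ln (fst x0 / m0) then (1, 0) else (1/2, 1/2)) x0 \<eta>'"
    and cost: "4 * exp (2 * T) * cost (\<eta>' T) = (2 * m0 * exp (T/2))^2"
    using turnpike_control_cost[OF mean_x0_pos order t0] by blast
  have "(\<lambda>t. if t < 2 * ln (fst x0 / m0) then (1::real, 0::real) else (1/2, 1/2)) \<in> U1 T"
    by (rule piecewise_control_in_U1) auto
  from scaled_cost_le[OF this traj]
  have "(2 * m0 * X * exp (T/2))^2 + (exp T * d T)^2 \<le> (2 * m0 * exp (T/2))^2"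
    unfolding cost scaled_cost_eq .
  moreover have "(2 * m0 * exp (T/2))^2 \<le> (2 * m0 * X * exp (T/2))^2"
    using X_ge_1 mean_x0_pos by (intro power_mono) auto
  ultimately have "(exp T * d T)^2 \<le> 0" and X_sq: "(2 * m0 * X * exp (T/2))^2 \<le> (2 * m0 * exp (T/2))^2"
    using zero_le_power2[of "exp T * d T"] by linarith+
  then show "d T = 0"
    by simp
  have "2 * m0 * exp (T/2) * X \<le> 2 * m0 * exp (T/2) * 1"
    using power2_le_imp_le[OF X_sq] mean_x0_pos by (simp add: mult.commute mult.left_commute)
  then show "X = 1"
    using X_ge_1 mean_x0_pos by (simp add: mult_le_cancel_left_pos)
qed

lemma switch_gap_X_pos:
  assumes gap_1: "0 < switch_gap d0 m0 (exp (T/2)) 1"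
  shows "0 < switch_gap d0 m0 (exp (T/2)) X"
proof (rule ccontr)
  assume "\<not> ?thesis"
  moreover from this have "X \<noteq> 1"
    using gap_1 by auto
  ultimately have "switch_cost d0 m0 (exp (T/2)) 1 < (2 * m0 * X * exp (T/2))^2"
    using X_ge_1 mean_x0_pos gap_1 by (intro switch_cost_1_lt) auto
  also have "\<dots> \<le> 4 * exp (2 * T) * cost (\<eta> T)"
    by (simp add: scaled_cost_eq)
  also have "\<dots> \<le> switch_cost d0 m0 (exp (T/2)) 1"
    using T_pos by (intro scaled_cost_le_switch_cost) auto
  finally show False
    by simp
qed

lemma short_horizon:
  assumes gap_1: "0 < switch_gap d0 m0 (exp (T/2)) 1"
  shows "exp T * d T = switch_gap d0 m0 (exp (T/2)) X"
    and "slack_snd = 0" and "slack_early = 0"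
    and "\<forall>Y\<in>{1..exp (T/2)}. switch_cost d0 m0 (exp (T/2)) X \<le> switch_cost d0 m0 (exp (T/2)) Y"
proof -
  let ?G = "switch_gap d0 m0 (exp (T/2)) X"
  have "0 < ?G"
    using switch_gap_X_pos[OF gap_1] .
  moreover have "?G \<le> exp T * d T"
    using gap_decomposition slack_snd_nonneg slack_early_nonneg slack_late_nonneg by linarith
  ultimately have "?G^2 \<le> (exp T * d T)^2"
    by (intro power_mono) auto
  then have cost_ge: "switch_cost d0 m0 (exp (T/2)) X \<le> 4 * exp (2 * T) * cost (\<eta> T)"
    unfolding scaled_cost_eq switch_cost_def by linarith
  moreover have "4 * exp (2 * T) * cost (\<eta> T) \<le> switch_cost d0 m0 (exp (T/2)) X"
    using X_ge_1 X_le_exp by (intro scaled_cost_le_switch_cost) auto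
  ultimately have "(exp T * d T)^2 \<le> ?G^2"
    unfolding scaled_cost_eq switch_cost_def by linarith
  then have "exp T * d T \<le> ?G"
    by (rule power2_le_imp_le) (use \<open>0 < ?G\<close> in simp)
  then show "exp T * d T = ?G" "slack_snd = 0" "slack_early = 0"
    using \<open>?G \<le> exp T * d T\<close> gap_decomposition slack_snd_nonneg slack_early_nonneg slack_late_nonneg
    by linarith+
  show "\<forall>Y\<in>{1..exp (T/2)}. switch_cost d0 m0 (exp (T/2)) X \<le> switch_cost d0 m0 (exp (T/2)) Y"
    using cost_ge scaled_cost_le_switch_cost by (meson order_trans)
qed

lemma X_lt_exp:
  assumes gap_1: "0 < switch_gap d0 m0 (exp (T/2)) 1" and order: "snd x0 < fst x0"
  shows "X < exp (T/2)"
proof (rule ccontr)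
  assume "\<not> X < exp (T/2)"
  then have "X = exp (T/2)"
    using X_le_exp by simp
  obtain Y where Y: "Y \<in> {1..<exp (T/2)}"
    and "switch_cost d0 m0 (exp (T/2)) Y < switch_cost d0 m0 (exp (T/2)) (exp (T/2))"
    using switch_cost_lt_at_end[of m0 "exp (T/2)" d0] mean_x0_pos T_pos order by auto
  moreover have "switch_cost d0 m0 (exp (T/2)) X \<le> switch_cost d0 m0 (exp (T/2)) Y"
    using short_horizon(4)[OF gap_1] Y by simp
  ultimately show False
    using \<open>X = exp (T/2)\<close> by simp
qed

lemma short_horizon_control:
  assumes gap_1: "0 < switch_gap d0 m0 (exp (T/2)) 1"
  shows "AE t in lborel. t \<in> {0..<2 * ln X} \<longrightarrow> \<beta> t = (0, 0)"
    and "AE t in lborel. t \<in> {2 * ln X..T} \<longrightarrow> \<beta> t = (1, 0)"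
proof -
  note slacks = short_horizon(2,3)[OF gap_1]
  show "AE t in lborel. t \<in> {0..<2 * ln X} \<longrightarrow> \<beta> t = (0, 0)"
    using AE_control_eq_0_before_tau[OF slacks(2)] by eventually_elim (auto simp: \<tau>_def)
  have "AE t in lborel. (t \<in> {\<tau>..T} \<longrightarrow> fst (\<beta> t) + snd (\<beta> t) = 1) \<and> (t \<in> {0..T} \<longrightarrow> snd (\<beta> t) = 0)"
    using AE_control_sum_eq_1_after_tau[OF slacks(2)] AE_snd_control_eq_0_of_slack_snd_eq_0[OF slacks(1)]
    by (rule eventually_conj)
  then show "AE t in lborel. t \<in> {2 * ln X..T} \<longrightarrow> \<beta> t = (1, 0)"
    by eventually_elim (use tau_in in \<open>auto simp: \<tau>_def prod_eq_iff\<close>)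
qed

end

theorem theorem1:
  fixes T :: real and x0 :: "real \<times> real"
    and \<alpha> \<xi> :: "real \<Rightarrow> real \<times> real"
  assumes T_pos: "T > 0"
    and init_mean: "mean x0 > 0"
    and init_order: "fst x0 > snd x0"
    and opt: "optimal_pair T x0 \<alpha> \<xi>"
    and ordered: "\<forall>t\<in>{0..T}. fst (\<xi> t) \<ge> snd (\<xi> t)"
  defines "t0 \<equiv> 2 * ln (fst x0 / mean x0)"
  shows
    "(T \<ge> t0 \<longleftrightarrow> fst (\<xi> T) = snd (\<xi> T))
     \<and> (T \<ge> t0 \<longrightarrow>
          (AE t in lborel. t \<in> {0..T} \<longrightarrow> fst (\<alpha> t) + snd (\<alpha> t) = 1)
        \<and> (\<forall>t\<in>{0..T}. mean (\<xi> t) = mean x0 * exp (- t / 2))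
        \<and> optimal_control T x0 (\<lambda>t. if t < t0 then (1, 0) else (1/2, 1/2)))
     \<and> (T < t0 \<longrightarrow>
          (\<exists>X. X \<in> {1..<exp (T/2)}
             \<and> (\<forall>Y\<in>{1..exp (T/2)}.
                  (fst x0 + mean x0 * (X^2 - 1))^2
                    + (snd x0 + mean x0 * (X^2 - 1) + 2 * mean x0 * X * (exp (T/2) - X))^2
                  \<le> (fst x0 + mean x0 * (Y^2 - 1))^2
                    + (snd x0 + mean x0 * (Y^2 - 1) + 2 * mean x0 * Y * (exp (T/2) - Y))^2)
             \<and> (AE t in lborel. t \<in> {0..<2 * ln X} \<longrightarrow> \<alpha> t = (0, 0))
             \<and> (AE t in lborel. t \<in> {2 * ln X..T} \<longrightarrow> \<alpha> t = (1, 0))))"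
proof -
  interpret optimal_trajectory T x0 \<alpha> \<xi>
    using T_pos init_mean opt by unfold_locales (auto simp: optimal_pair_def)
  have short_iff: "T < t0 \<longleftrightarrow> 0 < switch_gap d0 m0 (exp (T/2)) 1"
    using switch_gap_1_pos_iff[OF init_mean] init_order by (simp add: t0_def)
  have long: "d T = 0" "X = 1" if "t0 \<le> T"
    using long_horizon that init_order by (simp_all add: t0_def)
  have short: "0 < exp T * d T" "X \<in> {1..<exp (T/2)}"
    "\<forall>Y\<in>{1..exp (T/2)}. switch_cost d0 m0 (exp (T/2)) X \<le> switch_cost d0 m0 (exp (T/2)) Y"
    "AE t in lborel. t \<in> {0..<2 * ln X} \<longrightarrow> \<alpha> t = (0, 0)"
    "AE t in lborel. t \<in> {2 * ln X..T} \<longrightarrow> \<alpha> t = (1, 0)"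
    if "T < t0"
    using that short_iff short_horizon(1,4) switch_gap_X_pos X_ge_1 X_lt_exp init_order
      short_horizon_control by auto
  have "t0 \<le> T \<longleftrightarrow> fst (\<xi> T) = snd (\<xi> T)"
    using long short(1) by (force simp: d_def)
  then show ?thesis
    using long short AE_control_sum_eq_1_of_X_eq_1 m_eq_of_X_eq_1
      turnpike_control_optimal[OF T_pos init_mean] init_order
    by (intro conjI impI exI[of _ X]) (auto simp: m_def t0_def sum_squares_eq_half_switch_cost)
qed

end
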